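(* Let $u$ be a vertex of $K$ and $n\in\mathbb N$. The edge-path distance from any boundary vertex of the ball $B(u,n,K)$ to $u$ is either $n$ or $n-1$.
   Context: $K$ is the pentagonal combinatorial tiling: a 2-dimensional CW-complex homeomorphic to the open disk, obtained as follows. The subdivision rule $\omega$ acts on a pentagon with boundary vertices $v_1,\dots,v_5$ in cyclic order (indices mod 5): add a vertex $m_i$ inside each edge $v_iv_{i+1}$, interior vertices $c_1,\dots,c_5$, edges $c_ic_{i+1}$ and $c_im_i$, and replace the face by the central pentagon $c_1\cdots c_5$ and petals $v_i\,m_i\,c_i\,c_{i-1}\,m_{i-1}$. $K_0$ is one pentagon, $K_n=\omega^n(K_0)$, $K_n$ embeds onto the central superpentagon $\omega^n(\text{central face of }\omega(K_0))$ of $K_{n+1}$, and $K$ is the direct limit. Distance between vertices is the length of a shortest edge path. $B(u,n,K)$ is the subcomplex of $K$ consisting of the faces all of whose vertices are at distance at most $n$ from $u$, with their edges and vertices. Its boundary consists of the edges $e$ that lie in a face in the ball and in a face not in the ball, together with their vertices. *)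

theory Defs
  imports Main "HOL-Library.FSet"
begin

text \<open>Cor n i is the i-th corner (i < 5) of the n-th superpentagon P_n;
  M {a,b} is the vertex added inside the edge ab; C F i is the interior vertex c_i
  added inside the face F (a face is the cyclic list of its 5 boundary vertices).\<close>
datatype vtx = Cor nat nat | M "vtx fset" | C "vtx list" nat

definition corner_face :: "nat \<Rightarrow> vtx list" where
  "corner_face n = map (Cor n) [0..<5]"

text \<open>Name of the interior vertex c_i of face F.  The only exception is the
  superpentagon P_(n+1), whose central pentagon is named as P_n; this makes the
  embedding of K_n onto the central superpentagon of K_(n+1) a literal inclusion.\<close>
definition cen :: "vtx list \<Rightarrow> nat \<Rightarrow> vtx" where
  "cen F i = (if (\<exists>n. F = corner_face (Suc n))
              then Cor (THE n. F = corner_face (Suc n)) i else C F i)"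

definition mid :: "vtx \<Rightarrow> vtx \<Rightarrow> vtx" where
  "mid a b = M {|a, b|}"

text \<open>The subdivision rule omega on one pentagon v_0 ... v_4 (indices mod 5):
  central pentagon c_0 ... c_4 and petals v_i m_i c_i c_(i-1) m_(i-1).\<close>
definition omega_face :: "vtx list \<Rightarrow> vtx list set" where
  "omega_face F =
     {map (cen F) [0..<5]} \<union>
     (\<lambda>i. [F ! i, mid (F ! i) (F ! ((i + 1) mod 5)), cen F i, cen F ((i + 4) mod 5),
           mid (F ! ((i + 4) mod 5)) (F ! i)]) ` {0..<5}"

definition omega :: "vtx list set \<Rightarrow> vtx list set" where
  "omega X = \<Union> (omega_face ` X)"

text \<open>K_n = omega^n (K_0), with K_0 realised as the pentagon P_n.\<close>
definition Kn :: "nat \<Rightarrow> vtx list set" where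
  "Kn n = (omega ^^ n) {corner_face n}"

definition Kfaces :: "vtx list set" where
  "Kfaces = (\<Union>n. Kn n)"

definition Kverts :: "vtx set" where
  "Kverts = (\<Union>F\<in>Kfaces. set F)"

definition face_edges :: "vtx list \<Rightarrow> vtx set set" where
  "face_edges F = (\<lambda>i. {F ! i, F ! ((i + 1) mod 5)}) ` {0..<5}"

definition Kedges :: "vtx set set" where
  "Kedges = (\<Union>F\<in>Kfaces. face_edges F)"

definition Kadj :: "vtx \<Rightarrow> vtx \<Rightarrow> bool" where
  "Kadj a b \<longleftrightarrow> a \<noteq> b \<and> {a, b} \<in> Kedges"

definition Kdist :: "vtx \<Rightarrow> vtx \<Rightarrow> nat" where
  "Kdist u v = (LEAST k. (Kadj ^^ k) u v)"

definition ball_faces :: "vtx \<Rightarrow> nat \<Rightarrow> vtx list set" where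
  "ball_faces u n = {F \<in> Kfaces. \<forall>v \<in> set F. Kdist u v \<le> n}"

definition ball_boundary_edges :: "vtx \<Rightarrow> nat \<Rightarrow> vtx set set" where
  "ball_boundary_edges u n =
     {e. (\<exists>F \<in> ball_faces u n. e \<in> face_edges F) \<and>
         (\<exists>G \<in> Kfaces - ball_faces u n. e \<in> face_edges G)}"

definition ball_boundary_verts :: "vtx \<Rightarrow> nat \<Rightarrow> vtx set" where
  "ball_boundary_verts u n = \<Union> (ball_boundary_edges u n)"

end

theory Submission
  imports Defs
begin

text \<open>A face G outside the ball has a vertex w with Kdist u w > n. Any two vertices of a
  pentagon are joined by an edge path of length at most 2, so a vertex v shared by G and a
  face of the ball satisfies n - 1 \<le> Kdist u w - 2 \<le> Kdist u v \<le> n.\<close>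

lemma length_Kface: "G \<in> Kfaces \<Longrightarrow> length G = 5"
proof -
  assume "G \<in> Kfaces"
  then obtain n where "G \<in> (omega ^^ n) {corner_face n}"
    by (auto simp: Kfaces_def Kn_def)
  then show ?thesis
    by (cases n) (auto simp: corner_face_def omega_def omega_face_def)
qed

lemma face_edge_subset_face: "F \<in> Kfaces \<Longrightarrow> e \<in> face_edges F \<Longrightarrow> e \<subseteq> set F"
  using length_Kface[of F] by (auto simp: face_edges_def)

lemma Kadj_sym: "Kadj a b \<Longrightarrow> Kadj b a"
  by (auto simp: Kadj_def insert_commute)

lemma relpowp_sym:
  assumes "\<And>a b. R a b \<Longrightarrow> R b a"
  shows "(R ^^ k) a b \<Longrightarrow> (R ^^ k) b a"
proof (induction k arbitrary: b)
  case 0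
  then show ?case by simp
next
  case (Suc k)
  then obtain c where "(R ^^ k) a c" "R c b" by (auto elim: relpowp_Suc_E)
  with Suc.IH assms show ?case by (blast intro: relpowp_Suc_I2)
qed

lemma relpowp_le_2_of_reflcl:
  assumes "R\<^sup>=\<^sup>= a c" "R\<^sup>=\<^sup>= c b"
  shows "\<exists>j\<le>2. (R ^^ j) a b"
proof -
  have "\<exists>j\<le>1. (R ^^ j) x y" if "R\<^sup>=\<^sup>= x y" for x y
    using that
  proof (elim sup2E)
    assume "R x y"
    then have "(R ^^ 1) x y" by (metis relpowp_1)
    then show ?thesis by blast
  qed (auto intro: relpowp_0_I)
  then obtain j k where "j \<le> 1" "(R ^^ j) a c" "k \<le> 1" "(R ^^ k) c b"
    using assms by blast
  then have "(R ^^ (j + k)) a b" "j + k \<le> 2"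
    by (auto intro: relpowp_trans)
  then show ?thesis by blast
qed

lemma Kadj_reflcl_face_succ:
  assumes "G \<in> Kfaces" "i < 5"
  shows "Kadj\<^sup>=\<^sup>= (G ! i) (G ! ((i + 1) mod 5))"
proof -
  have "{G ! i, G ! ((i + 1) mod 5)} \<in> face_edges G"
    unfolding face_edges_def using assms(2) by (intro image_eqI[where x = i]) simp_all
  then have "{G ! i, G ! ((i + 1) mod 5)} \<in> Kedges"
    unfolding Kedges_def using assms(1) by (rule UN_I[rotated])
  then show ?thesis by (simp add: Kadj_def)
qed

lemma cyclic_index_within_two_steps:
  fixes i j :: nat
  assumes "i < 5" "j < 5"
  shows "j = i \<or> j = (i + 1) mod 5 \<or> j = ((i + 1) mod 5 + 1) mod 5 \<or>
    i = (j + 1) mod 5 \<or> i = ((j + 1) mod 5 + 1) mod 5"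
proof -
  have "i \<in> {0, 1, 2, 3, 4}" "j \<in> {0, 1, 2, 3, 4}"
    using assms by auto
  then show ?thesis by auto
qed

lemma face_vertices_two_steps:
  assumes G: "G \<in> Kfaces" and "a \<in> set G" "b \<in> set G"
  shows "\<exists>c. Kadj\<^sup>=\<^sup>= a c \<and> Kadj\<^sup>=\<^sup>= c b"
proof -
  have len: "length G = 5" using length_Kface G by blast
  obtain i j where ij: "i < 5" "j < 5" "a = G ! i" "b = G ! j"
    using assms(2,3) len by (metis in_set_conv_nth)
  let ?succ = "\<lambda>k. (k + 1) mod 5"
  have succ: "Kadj\<^sup>=\<^sup>= (G ! k) (G ! ?succ k)" "Kadj\<^sup>=\<^sup>= (G ! ?succ k) (G ! k)" if "k < 5" for k
    using Kadj_reflcl_face_succ[OF G that] Kadj_sym by auto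
  have succ_less: "?succ k < 5" for k :: nat by simp
  have "j = i \<or> j = ?succ i \<or> j = ?succ (?succ i) \<or> i = ?succ j \<or> i = ?succ (?succ j)"
    using cyclic_index_within_two_steps[OF ij(1,2)] .
  then show ?thesis
  proof (elim disjE)
    assume "j = i"
    then show ?thesis using ij by (intro exI[of _ a]) simp
  next
    assume "j = ?succ i"
    then show ?thesis using ij succ(1)[OF ij(1)] by (intro exI[of _ b]) simp
  next
    assume "j = ?succ (?succ i)"
    then show ?thesis
      using ij succ(1)[OF ij(1)] succ(1)[OF succ_less] by (intro exI[of _ "G ! ?succ i"]) simp
  next
    assume "i = ?succ j"
    then show ?thesis using ij succ(2)[OF ij(2)] by (intro exI[of _ a]) simp
  next
    assume "i = ?succ (?succ j)"
    then show ?thesis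
      using ij succ(2)[OF ij(2)] succ(2)[OF succ_less] by (intro exI[of _ "G ! ?succ j"]) simp
  qed
qed

text \<open>If v is unreachable from u then so is w, and both distances are the same junk value
  LEAST k. False.\<close>

lemma Kdist_le_add_path:
  assumes "(Kadj ^^ j) v w"
  shows "Kdist u w \<le> Kdist u v + j"
proof (cases "\<exists>k. (Kadj ^^ k) u v")
  case True
  then have "(Kadj ^^ Kdist u v) u v"
    unfolding Kdist_def by (rule LeastI_ex)
  then have "(Kadj ^^ (Kdist u v + j)) u w"
    using assms by (rule relpowp_trans)
  then show ?thesis
    unfolding Kdist_def by (rule Least_le)
next
  case False
  have "\<not> (Kadj ^^ k) u w" for k
    using False relpowp_trans[OF _ relpowp_sym[OF Kadj_sym assms]] by blast
  with False show ?thesis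
    by (simp add: Kdist_def)
qed

lemma Kdist_face_le:
  assumes "G \<in> Kfaces" "v \<in> set G" "w \<in> set G"
  shows "Kdist u w \<le> Kdist u v + 2"
proof -
  obtain c where "Kadj\<^sup>=\<^sup>= v c" "Kadj\<^sup>=\<^sup>= c w"
    using face_vertices_two_steps[OF assms] by blast
  then obtain j where "j \<le> 2" "(Kadj ^^ j) v w"
    using relpowp_le_2_of_reflcl[of Kadj v c w] by blast
  then show ?thesis
    using Kdist_le_add_path[of j v w u] by linarith
qed

theorem mainTheorem17:
  fixes u v :: vtx and n :: nat
  assumes "u \<in> Kverts"
    and "v \<in> ball_boundary_verts u n"
  shows "Kdist u v = n \<or> Kdist u v + 1 = n"
proof -
  obtain e F G where "v \<in> e" and F: "F \<in> ball_faces u n" "e \<in> face_edges F"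
    and G: "G \<in> Kfaces" "G \<notin> ball_faces u n" "e \<in> face_edges G"
    using assms(2) by (auto simp: ball_boundary_verts_def ball_boundary_edges_def)
  have "v \<in> set F" "v \<in> set G"
    using \<open>v \<in> e\<close> face_edge_subset_face F G by (auto simp: ball_faces_def)
  then have inside: "Kdist u v \<le> n"
    using F(1) by (auto simp: ball_faces_def)
  obtain w where "w \<in> set G" "n < Kdist u w"
    using G(1,2) by (auto simp: ball_faces_def not_le)
  moreover have "Kdist u w \<le> Kdist u v + 2"
    using Kdist_face_le G(1) \<open>v \<in> set G\<close> \<open>w \<in> set G\<close> by blast
  ultimately show ?thesis
    using inside by linarith
qed

end
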